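(* Suppose $\sum_{r:\rho_r\le 1/(4k^2)}\rho_r(1-\rho_r)^k\ge\frac{1-\tau}{2}$. For every $\Delta\in(0,1)$, if $N\ge 12k^2\ln(2R/\Delta)+\frac{16\ln(2/\Delta)}{1-\tau}$, then with probability at least $1-\Delta$, $1-\widehat\tau\ge\frac{1-\tau}{8}$.
   Context: Let $R\ge 2$ be an integer and $\rho=(\rho_1,\dots,\rho_R)$ a probability vector with $\rho_r>0$ for all $r$. Let $Y_1,\dots,Y_N$ be i.i.d. labels with $\mathbb P(Y_j=r)=\rho_r$, $N_r=|\{j:Y_j=r\}|$, $\widehat\rho_r=N_r/N$. Fix an integer $k\ge1$. Set $\tau:=1-\sum_{r}\rho_r(1-\rho_r)^k$ and $\widehat\tau:=1-\sum_r\widehat\rho_r(1-\widehat\rho_r)^k$. *)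

theory Defs
  imports "HOL-Probability.Probability"
begin

text \<open>Labels take values in {0..<R}; the label distribution is a pmf p with
  rho r = pmf p r. Samples Y_0,...,Y_{N-1} are i.i.d. p, modelled by Pi_pmf.\<close>

definition tau :: "nat \<Rightarrow> nat \<Rightarrow> (nat \<Rightarrow> real) \<Rightarrow> real" where
  "tau R k rho = 1 - (\<Sum>r<R. rho r * (1 - rho r) ^ k)"

definition rho_hat :: "nat \<Rightarrow> (nat \<Rightarrow> nat) \<Rightarrow> nat \<Rightarrow> real" where
  "rho_hat N Y r = real (card {j\<in>{..<N}. Y j = r}) / real N"

definition tau_hat :: "nat \<Rightarrow> nat \<Rightarrow> nat \<Rightarrow> (nat \<Rightarrow> nat) \<Rightarrow> real" where
  "tau_hat R k N Y = tau R k (rho_hat N Y)"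

end

theory Submission
  imports Defs
begin

text \<open>Call a label \<open>r\<close> small if \<open>\<rho>\<^sub>r \<le> 1/(4k\<^sup>2)\<close>, and let \<open>\<mu>\<close> be the total mass of the
  small labels; the hypothesis gives \<open>\<mu> \<ge> (1 - \<tau>)/2\<close>. By Hoeffding's inequality a small label
  reaches empirical frequency \<open>1/(2k)\<close> only with probability \<open>exp (-N/(8k\<^sup>2))\<close>. If none does,
  Bernoulli's inequality gives \<open>(1 - rho_hat r)\<^sup>k \<ge> 1/2\<close> for every small label, hence
  \<open>1 - tau_hat\<close> is at least half the empirical mass of the small labels. The number of
  samples with a small label is binomial with mean \<open>N\<mu>\<close>, and a multiplicative Chernoff bound
  shows that it is at least \<open>N\<mu>/2\<close> except with probability \<open>exp (-N\<mu>/8)\<close>. A union bound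
  over these at most \<open>R + 1\<close> events finishes the proof.\<close>

lemma sum_binomial_pmf_div_power_2:
  assumes "0 \<le> q" "q \<le> 1"
  shows "(\<Sum>x\<le>n. pmf (binomial_pmf n q) x / 2 ^ x) = (1 - q / 2) ^ n"
proof -
  have "(\<Sum>x\<le>n. pmf (binomial_pmf n q) x / 2 ^ x)
      = (\<Sum>x\<le>n. real (n choose x) * (q / 2) ^ x * (1 - q) ^ (n - x))"
    using assms by (simp add: power_divide)
  also have "\<dots> = (q / 2 + (1 - q)) ^ n"
    by (rule binomial_ring[symmetric])
  finally show ?thesis by simp
qed

lemma prob_binomial_pmf_le_half_mean:
  assumes q: "0 \<le> q" "q \<le> 1"
  shows "measure_pmf.prob (binomial_pmf n q) {x. real x \<le> n * q / 2} \<le> exp (- (n * q / 8))"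
proof -
  \<comment> \<open>Chernoff's bound with \<open>e\<^sup>s = 1/2\<close>; the constant \<open>1/8\<close> comes from \<open>ln 2 < 3/4\<close>.\<close>
  define a where "a = n * q / 2"
  define E where "E = {x. real x \<le> a}"
  define B where "B = E \<inter> set_pmf (binomial_pmf n q)"
  have B: "B \<subseteq> {..n}"
    using q by (auto simp: B_def set_pmf_binomial_eq split: if_splits)
  have "measure_pmf.prob (binomial_pmf n q) E = measure_pmf.prob (binomial_pmf n q) B"
    unfolding B_def by (rule measure_Int_set_pmf[symmetric])
  also have "\<dots> = (\<Sum>x\<in>B. pmf (binomial_pmf n q) x)"
    using B by (intro measure_measure_pmf_finite) (auto intro: finite_subset)
  also have "\<dots> \<le> (\<Sum>x\<in>B. pmf (binomial_pmf n q) x * (2 powr a / 2 ^ x))"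
  proof (intro sum_mono)
    fix x assume "x \<in> B"
    have "(2::real) ^ x = 2 powr x"
      by (simp add: powr_realpow)
    also have "\<dots> \<le> 2 powr a"
      using \<open>x \<in> B\<close> by (intro powr_mono) (auto simp: B_def E_def)
    finally have "1 \<le> 2 powr a / 2 ^ x"
      by simp
    from mult_left_mono[OF this pmf_nonneg]
    show "pmf (binomial_pmf n q) x \<le> pmf (binomial_pmf n q) x * (2 powr a / 2 ^ x)"
      by simp
  qed
  also have "\<dots> \<le> (\<Sum>x\<le>n. pmf (binomial_pmf n q) x * (2 powr a / 2 ^ x))"
    using B by (intro sum_mono2) auto
  also have "\<dots> = 2 powr a * (1 - q / 2) ^ n"
    by (simp add: sum_binomial_pmf_div_power_2[OF q, symmetric] sum_distrib_left mult_ac)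
  also have "\<dots> \<le> exp (ln 2 * a) * exp (- q / 2) ^ n"
    using q exp_ge_add_one_self[of "- q / 2"]
    by (intro mult_mono power_mono) (auto simp: powr_def mult.commute)
  also have "\<dots> = exp (ln 2 * a - n * q / 2)"
    by (simp add: exp_of_nat_mult[symmetric] exp_add[symmetric])
  also have "\<dots> \<le> exp (- (n * q / 8))"
  proof -
    have "ln 2 * a \<le> 25 / 36 * a"
      using ln2_le_25_over_36 q by (intro mult_right_mono) (auto simp: a_def)
    moreover have "0 \<le> a" "n * q / 2 = a" "n * q / 8 = a / 4"
      using q by (simp_all add: a_def)
    ultimately have "ln 2 * a - n * q / 2 \<le> - (n * q / 8)"
      by linarith
    then show ?thesis
      by simp
  qed
  finally show ?thesis
    by (simp add: E_def a_def)
qed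

lemma map_pmf_mem_eq_bernoulli_pmf:
  "map_pmf (\<lambda>y. y \<in> A) p = bernoulli_pmf (measure_pmf.prob p A)"
proof (rule pmf_eqI)
  fix b :: bool
  have "(\<lambda>y. y \<in> A) -` {b} = (if b then A else UNIV - A)" by auto
  then show "pmf (map_pmf (\<lambda>y. y \<in> A) p) b = pmf (bernoulli_pmf (measure_pmf.prob p A)) b"
    using measure_pmf.prob_compl[of A p] by (simp add: pmf_map)
qed

lemma map_pmf_count_Pi_pmf:
  assumes "finite I"
  shows "map_pmf (\<lambda>Y. card {j\<in>I. Y j \<in> A}) (Pi_pmf I d (\<lambda>_. p))
           = binomial_pmf (card I) (measure_pmf.prob p A)"
proof -
  have "binomial_pmf (card I) (measure_pmf.prob p A)
      = map_pmf (\<lambda>f. card {j\<in>I. f j}) (Pi_pmf I (d \<in> A) (\<lambda>_. map_pmf (\<lambda>y. y \<in> A) p))"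
    using assms by (simp add: binomial_pmf_altdef' map_pmf_mem_eq_bernoulli_pmf)
  also have "\<dots> = map_pmf (\<lambda>Y. card {j\<in>I. Y j \<in> A}) (Pi_pmf I d (\<lambda>_. p))"
    using assms by (subst Pi_pmf_map) (simp_all add: pmf.map_comp o_def)
  finally show ?thesis ..
qed

lemma prob_Pi_pmf_count:
  assumes "finite I"
  shows "measure_pmf.prob (Pi_pmf I d (\<lambda>_. p)) {Y. P (card {j\<in>I. Y j \<in> A})}
           = measure_pmf.prob (binomial_pmf (card I) (measure_pmf.prob p A)) {x. P x}"
  by (subst map_pmf_count_Pi_pmf[OF assms, symmetric]) (simp add: vimage_def)

lemma prob_Compl_Un_UN_ge:
  assumes "finite I"
  shows "measure_pmf.prob M (- (A \<union> (\<Union>i\<in>I. B i)))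
           \<ge> 1 - measure_pmf.prob M A - (\<Sum>i\<in>I. measure_pmf.prob M (B i))"
proof -
  have "measure_pmf.prob M (A \<union> (\<Union>i\<in>I. B i))
      \<le> measure_pmf.prob M A + measure_pmf.prob M (\<Union>i\<in>I. B i)"
    by (rule measure_Un_le) auto
  also have "measure_pmf.prob M (\<Union>i\<in>I. B i) \<le> (\<Sum>i\<in>I. measure_pmf.prob M (B i))"
    by (rule measure_pmf.finite_measure_subadditive_finite[OF assms]) auto
  finally show ?thesis
    using measure_pmf.prob_compl[of "A \<union> (\<Union>i\<in>I. B i)" M] by (simp add: Compl_eq_Diff_UNIV)
qed

lemma exp_minus_le_of_ln_le:
  fixes x t :: real
  assumes "0 < x" and "ln (1 / x) \<le> t"
  shows "exp (- t) \<le> x"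
proof -
  have "exp (- t) \<le> exp (- ln (1 / x))"
    unfolding exp_le_cancel_iff using assms(2) by linarith
  also have "\<dots> = x"
    using assms(1) by (simp add: ln_div)
  finally show ?thesis .
qed

lemma rho_hat_nonneg: "0 \<le> rho_hat N Y r"
  by (simp add: rho_hat_def)

lemma rho_hat_le_1: "rho_hat N Y r \<le> 1"
proof -
  have "card {j\<in>{..<N}. Y j = r} \<le> card {..<N}"
    by (intro card_mono) auto
  then show ?thesis
    unfolding rho_hat_def by (auto simp: divide_le_eq_1)
qed

lemma sum_rho_hat:
  assumes "finite S"
  shows "(\<Sum>r\<in>S. rho_hat N Y r) = card {j\<in>{..<N}. Y j \<in> S} / N"
proof -
  have "{j\<in>{..<N}. Y j \<in> S} = (\<Union>r\<in>S. {j\<in>{..<N}. Y j = r})"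
    by auto
  also have "card \<dots> = (\<Sum>r\<in>S. card {j\<in>{..<N}. Y j = r})"
    by (rule card_UN_disjoint) (use assms in auto)
  finally show ?thesis
    by (simp add: rho_hat_def sum_divide_distrib)
qed

lemma one_minus_tau_hat_eq_sum: "1 - tau_hat R k N Y = (\<Sum>r<R. rho_hat N Y r * (1 - rho_hat N Y r) ^ k)"
  by (simp add: tau_hat_def tau_def)

lemma one_minus_tau_hat_nonneg: "0 \<le> 1 - tau_hat R k N Y"
  unfolding one_minus_tau_hat_eq_sum
  by (intro sum_nonneg mult_nonneg_nonneg zero_le_power) (simp_all add: rho_hat_nonneg rho_hat_le_1)

lemma half_sum_rho_hat_le_one_minus_tau_hat:
  assumes "S \<subseteq> {..<R}" and "k \<ge> 1"
    and rare: "\<And>r. r \<in> S \<Longrightarrow> rho_hat N Y r < 1 / (2 * real k)"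
  shows "(\<Sum>r\<in>S. rho_hat N Y r) / 2 \<le> 1 - tau_hat R k N Y"
proof -
  have "(\<Sum>r\<in>S. rho_hat N Y r) / 2 \<le> (\<Sum>r\<in>S. rho_hat N Y r * (1 - rho_hat N Y r) ^ k)"
    unfolding sum_divide_distrib
  proof (intro sum_mono)
    fix r assume "r \<in> S"
    have "1 + k * (- rho_hat N Y r) \<le> (1 + (- rho_hat N Y r)) ^ k"
      using rho_hat_le_1 by (intro Bernoulli_inequality) simp
    moreover have "k * rho_hat N Y r \<le> 1 / 2"
      using rare[OF \<open>r \<in> S\<close>] \<open>k \<ge> 1\<close> by (simp add: field_simps)
    ultimately have "1 / 2 \<le> (1 - rho_hat N Y r) ^ k"
      by simp
    from mult_left_mono[OF this rho_hat_nonneg]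
    show "rho_hat N Y r / 2 \<le> rho_hat N Y r * (1 - rho_hat N Y r) ^ k"
      by simp
  qed
  also have "\<dots> \<le> 1 - tau_hat R k N Y"
    unfolding one_minus_tau_hat_eq_sum using assms(1)
    by (intro sum_mono2) (auto simp: rho_hat_nonneg rho_hat_le_1)
  finally show ?thesis .
qed

lemma prob_rho_hat_ge:
  fixes k :: real
  assumes "k \<ge> 1" and small: "pmf p r \<le> 1 / (4 * k\<^sup>2)"
  shows "measure_pmf.prob (Pi_pmf {..<N} d (\<lambda>_. p)) {Y. 1 / (2 * k) \<le> rho_hat N Y r}
           \<le> exp (- (N / (8 * k\<^sup>2)))"
proof (cases "N = 0")
  case True
  then show ?thesis
    using \<open>k \<ge> 1\<close> by (simp add: rho_hat_def)
next
  case False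
  define \<epsilon> where "\<epsilon> = 1 / (2 * k) - pmf p r"
  have "1 / (4 * k\<^sup>2) \<le> 1 / (4 * k)"
    using \<open>k \<ge> 1\<close> by (intro divide_left_mono) (auto simp: power2_eq_square)
  then have \<epsilon>: "1 / (4 * k) \<le> \<epsilon>"
    using small by (simp add: \<epsilon>_def)
  have "0 < 1 / (4 * k)"
    using \<open>k \<ge> 1\<close> by simp
  with \<epsilon> have "0 \<le> \<epsilon>"
    by linarith
  interpret binomial_distribution N "pmf p r"
    by unfold_locales (simp add: pmf_le_1)
  have "measure_pmf.prob (Pi_pmf {..<N} d (\<lambda>_. p)) {Y. 1 / (2 * k) \<le> rho_hat N Y r}
      = measure_pmf.prob (binomial_pmf N (pmf p r)) {x. pmf p r + \<epsilon> \<le> x / N}"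
    using prob_Pi_pmf_count[of "{..<N}" d p "\<lambda>x. 1 / (2 * k) \<le> x / N" "{r}"]
    by (simp add: rho_hat_def \<epsilon>_def measure_pmf_single)
  also have "\<dots> \<le> exp (-2 * N * \<epsilon>\<^sup>2)"
    using False \<open>0 \<le> \<epsilon>\<close> by (intro prob_ge') auto
  also have "\<dots> \<le> exp (- (N / (8 * k\<^sup>2)))"
  proof -
    have "2 * N * (1 / (4 * k))\<^sup>2 \<le> 2 * N * \<epsilon>\<^sup>2"
      using \<epsilon> \<open>k \<ge> 1\<close> by (intro mult_left_mono power_mono) auto
    then show ?thesis
      by (simp add: power2_eq_square)
  qed
  finally show ?thesis .
qed

lemma prob_one_minus_tau_hat_ge:
  fixes R k N :: nat and p :: "nat pmf" and S :: "nat set"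
  assumes "S \<subseteq> {..<R}" and "k \<ge> 1"
    and small: "\<And>r. r \<in> S \<Longrightarrow> pmf p r \<le> 1 / (4 * real k ^ 2)"
  shows "measure_pmf.prob (Pi_pmf {..<N} d (\<lambda>_. p))
             {Y. measure_pmf.prob p S / 4 \<le> 1 - tau_hat R k N Y}
           \<ge> 1 - exp (- (N * measure_pmf.prob p S / 8)) - card S * exp (- (N / (8 * real k ^ 2)))"
proof -
  define M where "M = Pi_pmf {..<N} d (\<lambda>_. p)"
  define \<mu> where "\<mu> = measure_pmf.prob p S"
  define Few where "Few = {Y. real (card {j\<in>{..<N}. Y j \<in> S}) \<le> N * \<mu> / 2}"
  define Frequent where "Frequent r = {Y. 1 / (2 * real k) \<le> rho_hat N Y r}" for r
  have "finite S"
    using assms(1) finite_subset by blast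
  have "- (Few \<union> (\<Union>r\<in>S. Frequent r)) \<subseteq> {Y. \<mu> / 4 \<le> 1 - tau_hat R k N Y}"
  proof
    fix Y assume "Y \<in> - (Few \<union> (\<Union>r\<in>S. Frequent r))"
    then have many: "N * \<mu> / 2 < card {j\<in>{..<N}. Y j \<in> S}"
      and rare: "\<And>r. r \<in> S \<Longrightarrow> rho_hat N Y r < 1 / (2 * real k)"
      by (auto simp: Few_def Frequent_def)
    then have "N > 0"
      by (cases N) auto
    with many have "\<mu> / 4 \<le> card {j\<in>{..<N}. Y j \<in> S} / N / 2"
      by (simp add: field_simps)
    also have "\<dots> = (\<Sum>r\<in>S. rho_hat N Y r) / 2"
      using \<open>finite S\<close> by (simp add: sum_rho_hat)
    also have "\<dots> \<le> 1 - tau_hat R k N Y"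
      by (rule half_sum_rho_hat_le_one_minus_tau_hat[OF assms(1,2) rare])
    finally show "Y \<in> {Y. \<mu> / 4 \<le> 1 - tau_hat R k N Y}"
      by simp
  qed
  then have "measure_pmf.prob M (- (Few \<union> (\<Union>r\<in>S. Frequent r)))
      \<le> measure_pmf.prob M {Y. \<mu> / 4 \<le> 1 - tau_hat R k N Y}"
    by (rule measure_pmf.finite_measure_mono) simp
  moreover have "measure_pmf.prob M (- (Few \<union> (\<Union>r\<in>S. Frequent r)))
      \<ge> 1 - measure_pmf.prob M Few - (\<Sum>r\<in>S. measure_pmf.prob M (Frequent r))"
    using \<open>finite S\<close> by (rule prob_Compl_Un_UN_ge)
  moreover have "measure_pmf.prob M Few \<le> exp (- (N * \<mu> / 8))"
    using prob_Pi_pmf_count[of "{..<N}" d p "\<lambda>x. real x \<le> N * \<mu> / 2" S]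
      prob_binomial_pmf_le_half_mean[of \<mu> N]
    by (simp add: M_def Few_def \<mu>_def)
  moreover have "(\<Sum>r\<in>S. measure_pmf.prob M (Frequent r)) \<le> card S * exp (- (N / (8 * real k ^ 2)))"
    using sum_mono[of S "\<lambda>r. measure_pmf.prob M (Frequent r)" "\<lambda>_. exp (- (N / (8 * real k ^ 2)))"]
      prob_rho_hat_ge[of "real k" p _ N d] small \<open>k \<ge> 1\<close>
    by (simp add: M_def Frequent_def)
  ultimately show ?thesis
    unfolding M_def \<mu>_def by linarith
qed

lemma sum_pmf_mult_power_le_prob:
  assumes "finite S"
  shows "(\<Sum>r\<in>S. pmf p r * (1 - pmf p r) ^ k) \<le> measure_pmf.prob p S"
proof -
  have "(\<Sum>r\<in>S. pmf p r * (1 - pmf p r) ^ k) \<le> (\<Sum>r\<in>S. pmf p r)"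
    by (intro sum_mono mult_left_le power_le_one) (simp_all add: pmf_le_1)
  also have "\<dots> = measure_pmf.prob p S"
    using assms by (simp add: measure_measure_pmf_finite)
  finally show ?thesis .
qed

lemma exp_bounds_of_sample_size:
  fixes R k N :: nat and \<Delta> T \<mu> :: real
  assumes "R \<ge> 1" and "k \<ge> 1" and "0 < \<Delta>" and "\<Delta> < 1" and "0 < T" and "T / 2 \<le> \<mu>"
    and N: "12 * real k ^ 2 * ln (2 * real R / \<Delta>) + 16 * ln (2 / \<Delta>) / T \<le> N"
  shows "exp (- (N * \<mu> / 8)) \<le> \<Delta> / 2"
    and "R * exp (- (N / (8 * real k ^ 2))) \<le> \<Delta> / 2"
proof -
  have "0 \<le> 16 * ln (2 / \<Delta>) / T" "0 \<le> 12 * real k ^ 2 * ln (2 * real R / \<Delta>)"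
    using assms(1-5) by simp_all
  with N have N_mass: "16 * ln (2 / \<Delta>) / T \<le> N"
    and N_labels: "12 * real k ^ 2 * ln (2 * real R / \<Delta>) \<le> N"
    by linarith+
  have "16 * ln (2 / \<Delta>) \<le> N * T"
    using N_mass \<open>0 < T\<close> by (simp add: field_simps)
  also have "\<dots> \<le> N * (2 * \<mu>)"
    using \<open>T / 2 \<le> \<mu>\<close> by (intro mult_left_mono) auto
  finally have "ln (1 / (\<Delta> / 2)) \<le> N * \<mu> / 8"
    by (simp add: mult_ac)
  then show "exp (- (N * \<mu> / 8)) \<le> \<Delta> / 2"
    using \<open>0 < \<Delta>\<close> by (intro exp_minus_le_of_ln_le) simp_all
  have "ln (1 / (\<Delta> / (2 * R))) \<le> N / (8 * real k ^ 2)"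
    using N_labels \<open>k \<ge> 1\<close> by (simp add: field_simps)
  then have "exp (- (N / (8 * real k ^ 2))) \<le> \<Delta> / (2 * R)"
    using assms(1,3) by (intro exp_minus_le_of_ln_le) simp_all
  then have "R * exp (- (N / (8 * real k ^ 2))) \<le> R * (\<Delta> / (2 * R))"
    by (intro mult_left_mono) auto
  also have "\<dots> = \<Delta> / 2"
    using \<open>R \<ge> 1\<close> by simp
  finally show "R * exp (- (N / (8 * real k ^ 2))) \<le> \<Delta> / 2" .
qed

theorem mainTheorem4:
  fixes R k N :: nat and p :: "nat pmf" and \<Delta> :: real
  assumes "R \<ge> 2"
    and "set_pmf p \<subseteq> {..<R}"
    and "\<And>r. r < R \<Longrightarrow> pmf p r > 0"
    and "k \<ge> 1"
    and "(\<Sum>r\<in>{r\<in>{..<R}. pmf p r \<le> 1 / (4 * real k ^ 2)}. pmf p r * (1 - pmf p r) ^ k)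
           \<ge> (1 - tau R k (pmf p)) / 2"
    and "0 < \<Delta>" and "\<Delta> < 1"
    and "real N \<ge> 12 * real k ^ 2 * ln (2 * real R / \<Delta>) + 16 * ln (2 / \<Delta>) / (1 - tau R k (pmf p))"
  shows "measure_pmf.prob (Pi_pmf {..<N} 0 (\<lambda>_. p))
           {Y. 1 - tau_hat R k N Y \<ge> (1 - tau R k (pmf p)) / 8} \<ge> 1 - \<Delta>"
proof (cases "tau R k (pmf p) < 1")
  \<comment> \<open>The hypotheses on \<open>set_pmf p\<close> and on the positivity of \<open>pmf p\<close> would only serve to show
    \<open>tau R k (pmf p) < 1\<close>; the other case is trivial, so they are not used.\<close>
  case False
  then have "(1 - tau R k (pmf p)) / 8 \<le> 1 - tau_hat R k N Y" for Y
    using one_minus_tau_hat_nonneg[of R k N Y] by (simp add: order_trans[rotated])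
  then show ?thesis
    using assms(6) by simp
next
  case True
  define T where "T = 1 - tau R k (pmf p)"
  define S where "S = {r\<in>{..<R}. pmf p r \<le> 1 / (4 * real k ^ 2)}"
  define \<mu> where "\<mu> = measure_pmf.prob p S"
  have "T / 2 \<le> \<mu>"
    using assms(5) sum_pmf_mult_power_le_prob[of S p k] by (simp add: T_def S_def \<mu>_def)
  then have exp_bounds: "exp (- (N * \<mu> / 8)) \<le> \<Delta> / 2" "R * exp (- (N / (8 * real k ^ 2))) \<le> \<Delta> / 2"
    using exp_bounds_of_sample_size[of R k \<Delta> T \<mu> N] assms True by (simp_all add: T_def)
  have "card S * exp (- (N / (8 * real k ^ 2))) \<le> R * exp (- (N / (8 * real k ^ 2)))"
    using card_mono[of "{..<R}" S] by (intro mult_right_mono) (auto simp: S_def)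
  moreover have "measure_pmf.prob (Pi_pmf {..<N} 0 (\<lambda>_. p)) {Y. \<mu> / 4 \<le> 1 - tau_hat R k N Y}
      \<le> measure_pmf.prob (Pi_pmf {..<N} 0 (\<lambda>_. p)) {Y. T / 8 \<le> 1 - tau_hat R k N Y}"
    using \<open>T / 2 \<le> \<mu>\<close> by (intro measure_pmf.finite_measure_mono) auto
  moreover have "1 - exp (- (N * \<mu> / 8)) - card S * exp (- (N / (8 * real k ^ 2)))
      \<le> measure_pmf.prob (Pi_pmf {..<N} 0 (\<lambda>_. p)) {Y. \<mu> / 4 \<le> 1 - tau_hat R k N Y}"
    unfolding \<mu>_def using assms(4) by (intro prob_one_minus_tau_hat_ge) (auto simp: S_def)
  ultimately show ?thesis
    using exp_bounds unfolding T_def by linarith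
qed

end
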